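(* Let $\mathbf{S}$ be a strong quasi-Wajsberg* algebra. Then there exist a Wajsberg* algebra $\mathbf{M}$ and a flat strong quasi-Wajsberg* algebra $\mathbf{FW^*}$ such that $\mathbf{S}$ can be embedded (by an injective homomorphism) into the direct product $\mathbf{M}\times\mathbf{FW^*}$.
   Context: A quasi-Wajsberg* algebra is an algebra $\langle W;\to,\neg,{}^+,{}^-,1\rangle$ of type $\langle 2,1,1,1,0\rangle$ (${}^+,{}^-$ bind more tightly than $\neg$, which binds more tightly than $\to$) such that for all $x,y,z$: (1) $x\to y=\neg y\to\neg x$; (2) $(x\to 1)\to((y\to 1)\to z)=(y\to 1)\to((x\to 1)\to z)$; (3) $(1\to x)\to 1=1$; (4) $(z\to z)\to(x\to y)=x\to y$; (5) $(1\to 1)\to x^{+}=((1\to 1)\to x)^{+}=(x\to 1)\to 1$ and $(1\to 1)\to x^{-}=((1\to 1)\to x)^{-}=(x\to\neg 1)\to\neg 1$; (6) $x\to y=(y^{+}\to x^{-})\to(x^{+}\to y^{-})$; (7) $\neg(x\to y)=y\to x$; (8) $\neg\neg x=x$; (9) $(x\to(\neg x\to y))^{+}=x^{+}\to(\neg x^{+}\to y^{+})$; (10) $x\vee y=y\vee x$; (11) $x\vee(y\vee z)=(x\vee y)\vee z$; (12) $x\to(y\vee z)=(x\to y)\vee(x\to z)$; where $x\vee y:=((x^{+}\to y^{+})^{+}\to(\neg x)^{-})\to((y^{-}\to x^{-})^{-}\to x^{-})$. It is strong if $x^+=(1\to 1)\to x^+$ and $x^-=(1\to 1)\to x^-$ for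 all $x$, and flat if $1\to 1=1$. A Wajsberg* algebra is an algebra $\langle M;\to,\neg,1\rangle$ of type $\langle 2,1,0\rangle$ such that, with $x^+:=(x\to 1)\to 1$, $x^-:=(x\to\neg 1)\to\neg 1$ and $\vee$ defined by the same formula, for all $x,y,z$: $x\to y=\neg y\to\neg x$; $(x\to 1)\to((y\to 1)\to z)=(y\to 1)\to((x\to 1)\to z)$; $(1\to x)\to 1=1$; $(y\to y)\to x=x$; $x\to y=(y^+\to x^-)\to(x^+\to y^-)$; $\neg(x\to y)=y\to x$; $\neg\neg x=x$; $(x\to(\neg x\to y))^+=x^+\to(\neg x^+\to y^+)$; $x\vee y=y\vee x$; $x\vee(y\vee z)=(x\vee y)\vee z$; $x\to(y\vee z)=(x\to y)\vee(x\to z)$. A Wajsberg* algebra is regarded as an algebra in the language $\langle\to,\neg,{}^+,{}^-,1\rangle$ with these defined ${}^+,{}^-$; direct products have coordinatewise operations and homomorphisms preserve $\to,\neg,{}^+,{}^-,1$. *)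

theory Defs
  imports Main
begin

text \<open>Algebras of type (2,1,1,1,0) in the language (\<rightarrow>, \<not>, +, -, 1), given by a carrier
  set and operations (only their behaviour on the carrier matters).\<close>

record 'a qalg =
  car :: "'a set"
  imp :: "'a \<Rightarrow> 'a \<Rightarrow> 'a"
  ng  :: "'a \<Rightarrow> 'a"
  pl  :: "'a \<Rightarrow> 'a"
  mi  :: "'a \<Rightarrow> 'a"
  unit :: "'a"

definition jn :: "'a qalg \<Rightarrow> 'a \<Rightarrow> 'a \<Rightarrow> 'a" where
  "jn A x y =
     imp A (imp A (pl A (imp A (pl A x) (pl A y))) (mi A (ng A x)))
           (imp A (mi A (imp A (mi A y) (mi A x))) (mi A x))"

definition closed_alg :: "'a qalg \<Rightarrow> bool" where
  "closed_alg A \<longleftrightarrow> unit A \<in> car A \<and>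
     (\<forall>x\<in>car A. \<forall>y\<in>car A. imp A x y \<in> car A) \<and>
     (\<forall>x\<in>car A. ng A x \<in> car A \<and> pl A x \<in> car A \<and> mi A x \<in> car A)"

definition quasi_wajsberg_star :: "'a qalg \<Rightarrow> bool" where
  "quasi_wajsberg_star A \<longleftrightarrow> closed_alg A \<and>
   (let i = imp A; n = ng A; p = pl A; m = mi A; e = unit A; j = jn A in
   (\<forall>x\<in>car A. \<forall>y\<in>car A. \<forall>z\<in>car A.
      i x y = i (n y) (n x) \<and>
      i (i x e) (i (i y e) z) = i (i y e) (i (i x e) z) \<and>
      i (i e x) e = e \<and>
      i (i z z) (i x y) = i x y \<and>
      i (i e e) (p x) = p (i (i e e) x) \<and> p (i (i e e) x) = i (i x e) e \<and>
      i (i e e) (m x) = m (i (i e e) x) \<and> m (i (i e e) x) = i (i x (n e)) (n e) \<and>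
      i x y = i (i (p y) (m x)) (i (p x) (m y)) \<and>
      n (i x y) = i y x \<and>
      n (n x) = x \<and>
      p (i x (i (n x) y)) = i (p x) (i (n (p x)) (p y)) \<and>
      j x y = j y x \<and>
      j x (j y z) = j (j x y) z \<and>
      i x (j y z) = j (i x y) (i x z)))"

definition strong_qws :: "'a qalg \<Rightarrow> bool" where
  "strong_qws A \<longleftrightarrow> quasi_wajsberg_star A \<and>
     (\<forall>x\<in>car A. pl A x = imp A (imp A (unit A) (unit A)) (pl A x) \<and>
                mi A x = imp A (imp A (unit A) (unit A)) (mi A x))"

definition flat_qws :: "'a qalg \<Rightarrow> bool" where
  "flat_qws A \<longleftrightarrow> quasi_wajsberg_star A \<and> imp A (unit A) (unit A) = unit A"

text \<open>Wajsberg* algebra, regarded in the language (\<rightarrow>, \<not>, +, -, 1) with the defined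
  operations x^+ = (x \<rightarrow> 1) \<rightarrow> 1 and x^- = (x \<rightarrow> \<not>1) \<rightarrow> \<not>1.\<close>

definition wajsberg_star :: "'a qalg \<Rightarrow> bool" where
  "wajsberg_star A \<longleftrightarrow> closed_alg A \<and>
   (let i = imp A; n = ng A; p = pl A; m = mi A; e = unit A; j = jn A in
   (\<forall>x\<in>car A. p x = i (i x e) e \<and> m x = i (i x (n e)) (n e)) \<and>
   (\<forall>x\<in>car A. \<forall>y\<in>car A. \<forall>z\<in>car A.
      i x y = i (n y) (n x) \<and>
      i (i x e) (i (i y e) z) = i (i y e) (i (i x e) z) \<and>
      i (i e x) e = e \<and>
      i (i y y) x = x \<and>
      i x y = i (i (p y) (m x)) (i (p x) (m y)) \<and>
      n (i x y) = i y x \<and>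
      n (n x) = x \<and>
      p (i x (i (n x) y)) = i (p x) (i (n (p x)) (p y)) \<and>
      j x y = j y x \<and>
      j x (j y z) = j (j x y) z \<and>
      i x (j y z) = j (i x y) (i x z)))"

definition prod_alg :: "'a qalg \<Rightarrow> 'b qalg \<Rightarrow> ('a \<times> 'b) qalg" where
  "prod_alg A B = \<lparr> car = car A \<times> car B,
     imp = (\<lambda>(a,b) (c,d). (imp A a c, imp B b d)),
     ng = (\<lambda>(a,b). (ng A a, ng B b)),
     pl = (\<lambda>(a,b). (pl A a, pl B b)),
     mi = (\<lambda>(a,b). (mi A a, mi B b)),
     unit = (unit A, unit B) \<rparr>"

definition is_hom :: "('a \<Rightarrow> 'b) \<Rightarrow> 'a qalg \<Rightarrow> 'b qalg \<Rightarrow> bool" where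
  "is_hom h A B \<longleftrightarrow> (\<forall>x\<in>car A. h x \<in> car B) \<and>
     h (unit A) = unit B \<and>
     (\<forall>x\<in>car A. \<forall>y\<in>car A. h (imp A x y) = imp B (h x) (h y)) \<and>
     (\<forall>x\<in>car A. h (ng A x) = ng B (h x) \<and> h (pl A x) = pl B (h x) \<and> h (mi A x) = mi B (h x))"

definition is_embedding :: "('a \<Rightarrow> 'b) \<Rightarrow> 'a qalg \<Rightarrow> 'b qalg \<Rightarrow> bool" where
  "is_embedding h A B \<longleftrightarrow> is_hom h A B \<and> inj_on h (car A)"

end

theory Submission
  imports Defs
begin

(* Let c = 1 -> 1.  In a strong quasi-Wajsberg* algebra the map x |-> c -> x is a homomorphism
   onto the regular elements {x. c -> x = x}; these satisfy (y -> y) -> x = x and so form a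
   Wajsberg* algebra.  Since ->, + and - only take regular values, collapsing the regular
   elements to a single point (and keeping all others apart) is a homomorphism onto a flat strong
   quasi-Wajsberg* algebra.  Together the two maps are injective: two elements with the same
   regularization are equal if both are regular, and are separated by the collapse otherwise. *)

lemma is_hom_comp:
  assumes "is_hom f A B" "is_hom g B C"
  shows "is_hom (\<lambda>x. g (f x)) A C"
  using assms unfolding is_hom_def by auto

lemma is_hom_pair:
  assumes "is_hom f S A" "is_hom g S B"
  shows "is_hom (\<lambda>x. (f x, g x)) S (prod_alg A B)"
  using assms unfolding is_hom_def prod_alg_def by auto

lemma quasi_wajsberg_starD:
  assumes "quasi_wajsberg_star A" "x \<in> car A" "y \<in> car A" "z \<in> car A"
  shows "imp A x y = imp A (ng A y) (ng A x)"
    and "imp A (imp A x (unit A)) (imp A (imp A y (unit A)) z) =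
         imp A (imp A y (unit A)) (imp A (imp A x (unit A)) z)"
    and "imp A (imp A (unit A) x) (unit A) = unit A"
    and "imp A (imp A z z) (imp A x y) = imp A x y"
    and "imp A (imp A (unit A) (unit A)) (pl A x) = pl A (imp A (imp A (unit A) (unit A)) x)"
    and "pl A (imp A (imp A (unit A) (unit A)) x) = imp A (imp A x (unit A)) (unit A)"
    and "imp A (imp A (unit A) (unit A)) (mi A x) = mi A (imp A (imp A (unit A) (unit A)) x)"
    and "mi A (imp A (imp A (unit A) (unit A)) x) = imp A (imp A x (ng A (unit A))) (ng A (unit A))"
    and "imp A x y = imp A (imp A (pl A y) (mi A x)) (imp A (pl A x) (mi A y))"
    and "ng A (imp A x y) = imp A y x"
    and "ng A (ng A x) = x"
    and "pl A (imp A x (imp A (ng A x) y)) = imp A (pl A x) (imp A (ng A (pl A x)) (pl A y))"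
    and "jn A x y = jn A y x"
    and "jn A x (jn A y z) = jn A (jn A x y) z"
    and "imp A x (jn A y z) = jn A (imp A x y) (imp A x z)"
  using assms unfolding quasi_wajsberg_star_def Let_def by blast+

lemma quasi_wajsberg_star_subalgebra:
  assumes "quasi_wajsberg_star A" "B \<subseteq> car A" "closed_alg (A\<lparr>car := B\<rparr>)"
  shows "quasi_wajsberg_star (A\<lparr>car := B\<rparr>)"
proof -
  have jn: "jn (A\<lparr>car := B\<rparr>) = jn A"
    by (intro ext) (simp add: jn_def)
  show ?thesis
    using assms unfolding quasi_wajsberg_star_def Let_def
    by (simp (no_asm) add: jn) (meson subsetD)
qed

lemma wajsberg_starI_quasi:
  assumes "quasi_wajsberg_star A"
    and "\<And>x y. x \<in> car A \<Longrightarrow> y \<in> car A \<Longrightarrow> imp A (imp A y y) x = x"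
    and "\<And>x. x \<in> car A \<Longrightarrow> pl A x = imp A (imp A x (unit A)) (unit A)"
    and "\<And>x. x \<in> car A \<Longrightarrow> mi A x = imp A (imp A x (ng A (unit A))) (ng A (unit A))"
  shows "wajsberg_star A"
  using assms unfolding wajsberg_star_def Let_def quasi_wajsberg_star_def by meson

(* An isomorphic copy of A in the type 'a set, as required for the Wajsberg* factor. *)
definition singleton_alg :: "'a qalg \<Rightarrow> 'a set qalg" where
  "singleton_alg A = \<lparr> car = (\<lambda>a. {a}) ` car A,
     imp = (\<lambda>X Y. {imp A (the_elem X) (the_elem Y)}),
     ng = (\<lambda>X. {ng A (the_elem X)}),
     pl = (\<lambda>X. {pl A (the_elem X)}),
     mi = (\<lambda>X. {mi A (the_elem X)}),
     unit = {unit A} \<rparr>"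

lemma is_hom_singleton_alg: "is_hom (\<lambda>x. {x}) A (singleton_alg A)"
  unfolding is_hom_def singleton_alg_def by simp

lemma wajsberg_star_singleton_alg:
  assumes "wajsberg_star A"
  shows "wajsberg_star (singleton_alg A)"
proof -
  have ops: "car (singleton_alg A) = (\<lambda>a. {a}) ` car A"
    "imp (singleton_alg A) {a} {b} = {imp A a b}" "ng (singleton_alg A) {a} = {ng A a}"
    "pl (singleton_alg A) {a} = {pl A a}" "mi (singleton_alg A) {a} = {mi A a}"
    "unit (singleton_alg A) = {unit A}" "jn (singleton_alg A) {a} {b} = {jn A a b}" for a b
    by (simp_all add: jn_def singleton_alg_def)
  have singleton_mem: "{a} \<in> (\<lambda>a. {a}) ` B \<longleftrightarrow> a \<in> B" for a :: 'a and B
    by auto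
  show ?thesis
    using assms unfolding wajsberg_star_def closed_alg_def Let_def
    by (simp (no_asm) add: ops singleton_mem) meson
qed

definition collapse :: "'a set \<Rightarrow> 'a \<Rightarrow> 'a set" where
  "collapse R x = (if x \<in> R then R else {x})"

lemma collapse_eq_iff: "collapse R x = collapse R y \<longleftrightarrow> x \<in> R \<and> y \<in> R \<or> x = y"
  unfolding collapse_def by auto

definition collapse_alg :: "'a qalg \<Rightarrow> 'a set \<Rightarrow> 'a set qalg" where
  "collapse_alg A R = \<lparr> car = collapse R ` car A,
     imp = (\<lambda>_ _. R),
     ng = (\<lambda>X. if X = R then R else {ng A (the_elem X)}),
     pl = (\<lambda>_. R),
     mi = (\<lambda>_. R),
     unit = R \<rparr>"

lemma ng_collapse_alg:
  assumes "ng A x \<in> R \<longleftrightarrow> x \<in> R"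
  shows "ng (collapse_alg A R) (collapse R x) = collapse R (ng A x)"
  using assms unfolding collapse_alg_def collapse_def by auto

lemma strong_flat_qws_collapse_alg:
  assumes closed: "closed_alg A" and "unit A \<in> R"
    and ng_ng: "\<And>x. x \<in> car A \<Longrightarrow> ng A (ng A x) = x"
    and ng_R: "\<And>x. x \<in> car A \<Longrightarrow> ng A x \<in> R \<longleftrightarrow> x \<in> R"
  shows "strong_qws (collapse_alg A R)" and "flat_qws (collapse_alg A R)"
proof -
  define F where "F = collapse_alg A R"
  have ops: "car F = collapse R ` car A" "imp F X Y = R" "pl F X = R" "mi F X = R"
    "unit F = R" "jn F X Y = R" "ng F R = R" for X Y
    by (simp_all add: F_def collapse_alg_def jn_def)
  have ng: "ng F (collapse R x) = collapse R (ng A x)" if "x \<in> car A" for x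
    unfolding F_def using ng_R[OF that] by (rule ng_collapse_alg)
  have ng_closed: "ng A x \<in> car A" if "x \<in> car A" for x
    using closed that by (simp add: closed_alg_def)
  have "collapse R (unit A) = R"
    using assms(2) by (simp add: collapse_def)
  then have "closed_alg F"
    using closed by (auto simp: closed_alg_def ops ng ng_closed)
  moreover have "ng F (ng F X) = X" if "X \<in> car F" for X
    using that ng ng_ng ng_closed by (auto simp: ops)
  ultimately have "quasi_wajsberg_star F"
    unfolding quasi_wajsberg_star_def Let_def by (simp add: ops)
  then show "strong_qws (collapse_alg A R)" and "flat_qws (collapse_alg A R)"
    unfolding F_def[symmetric] by (simp_all add: strong_qws_def flat_qws_def ops)
qed

lemma is_hom_collapse:
  assumes "unit A \<in> R"
    and "\<And>x y. x \<in> car A \<Longrightarrow> y \<in> car A \<Longrightarrow> imp A x y \<in> R"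
    and "\<And>x. x \<in> car A \<Longrightarrow> pl A x \<in> R" "\<And>x. x \<in> car A \<Longrightarrow> mi A x \<in> R"
    and "\<And>x. x \<in> car A \<Longrightarrow> ng A x \<in> R \<longleftrightarrow> x \<in> R"
  shows "is_hom (collapse R) A (collapse_alg A R)"
  using assms unfolding is_hom_def
  by (simp add: ng_collapse_alg) (simp add: collapse_alg_def collapse_def)

locale strong_qws_alg =
  fixes S :: "'a qalg"
  assumes strong_qws: "strong_qws S"
begin

abbreviation imp_S (infixr "\<rightarrow>" 65) where "x \<rightarrow> y \<equiv> imp S x y"
abbreviation ng_S ("\<sim>_" [80] 80) where "\<sim>x \<equiv> ng S x"
abbreviation unit_S ("\<one>") where "\<one> \<equiv> unit S"

definition regular :: "'a set" where
  "regular = {x \<in> car S. (\<one> \<rightarrow> \<one>) \<rightarrow> x = x}"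

lemma quasi_wajsberg_star: "quasi_wajsberg_star S"
  using strong_qws by (simp add: strong_qws_def)

lemma closed_alg: "closed_alg S"
  using quasi_wajsberg_star by (simp add: quasi_wajsberg_star_def)

lemma unit_closed: "\<one> \<in> car S"
  and imp_closed: "x \<in> car S \<Longrightarrow> y \<in> car S \<Longrightarrow> x \<rightarrow> y \<in> car S"
  and ng_closed: "x \<in> car S \<Longrightarrow> \<sim>x \<in> car S"
  and pl_closed: "x \<in> car S \<Longrightarrow> pl S x \<in> car S"
  and mi_closed: "x \<in> car S \<Longrightarrow> mi S x \<in> car S"
  using closed_alg by (simp_all add: closed_alg_def)

lemmas identities = quasi_wajsberg_starD[OF quasi_wajsberg_star]

lemma ng_ng: "x \<in> car S \<Longrightarrow> \<sim>\<sim>x = x"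
  using identities(11)[of x x x] .

lemma pl_prefix: "x \<in> car S \<Longrightarrow> (\<one> \<rightarrow> \<one>) \<rightarrow> pl S x = pl S x"
  and mi_prefix: "x \<in> car S \<Longrightarrow> (\<one> \<rightarrow> \<one>) \<rightarrow> mi S x = mi S x"
  using strong_qws by (simp_all add: strong_qws_def)

lemma imp_regular: "x \<in> car S \<Longrightarrow> y \<in> car S \<Longrightarrow> x \<rightarrow> y \<in> regular"
  using identities(4)[of x y \<one>] by (simp add: regular_def imp_closed unit_closed)

lemma unit_regular: "\<one> \<in> regular"
  using identities(3)[of \<one> \<one> \<one>] by (simp add: regular_def unit_closed)

lemma pl_regular: "x \<in> car S \<Longrightarrow> pl S x \<in> regular"
  and mi_regular: "x \<in> car S \<Longrightarrow> mi S x \<in> regular"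
  by (simp_all add: regular_def pl_prefix mi_prefix pl_closed mi_closed)

lemma regular_subset: "regular \<subseteq> car S"
  by (auto simp: regular_def)

lemma regular_absorb: "x \<in> regular \<Longrightarrow> y \<in> car S \<Longrightarrow> (y \<rightarrow> y) \<rightarrow> x = x"
  using identities(4)[of "\<one> \<rightarrow> \<one>" x y] by (simp add: regular_def imp_closed unit_closed)

lemma regularize_ng:
  assumes "x \<in> car S"
  shows "(\<one> \<rightarrow> \<one>) \<rightarrow> \<sim>x = \<sim>((\<one> \<rightarrow> \<one>) \<rightarrow> x)"
proof -
  have "(\<one> \<rightarrow> \<one>) \<rightarrow> \<sim>x = \<sim>\<sim>x \<rightarrow> \<sim>(\<one> \<rightarrow> \<one>)"
    using identities(1)[of "\<one> \<rightarrow> \<one>" "\<sim>x" x] assms by (simp add: imp_closed ng_closed unit_closed)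
  also have "\<dots> = x \<rightarrow> (\<one> \<rightarrow> \<one>)"
    using identities(10)[of \<one> \<one> \<one>] assms by (simp add: ng_ng unit_closed)
  also have "\<dots> = \<sim>((\<one> \<rightarrow> \<one>) \<rightarrow> x)"
    using identities(10)[of "\<one> \<rightarrow> \<one>" x x] assms by (simp add: imp_closed unit_closed)
  finally show ?thesis .
qed

lemma ng_regular_iff:
  assumes "x \<in> car S"
  shows "\<sim>x \<in> regular \<longleftrightarrow> x \<in> regular"
proof -
  have ng_regular: "\<sim>x \<in> regular" if "x \<in> regular" for x
    using that regularize_ng[of x] by (simp add: regular_def ng_closed)
  show ?thesis
    using ng_regular[of "\<sim>x"] ng_regular ng_ng[OF assms] by auto
qed

lemma pl_regularize: "x \<in> car S \<Longrightarrow> pl S ((\<one> \<rightarrow> \<one>) \<rightarrow> x) = pl S x"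
  and mi_regularize: "x \<in> car S \<Longrightarrow> mi S ((\<one> \<rightarrow> \<one>) \<rightarrow> x) = mi S x"
  using identities(5,7)[of x x x] pl_prefix mi_prefix by simp_all

(* Axiom (6) writes both sides in terms of x^+, x^-, y^+ and y^-, which regularization fixes. *)
lemma regularize_imp:
  assumes "x \<in> car S" "y \<in> car S"
  shows "((\<one> \<rightarrow> \<one>) \<rightarrow> x) \<rightarrow> ((\<one> \<rightarrow> \<one>) \<rightarrow> y) = x \<rightarrow> y"
  using identities(9)[OF assms assms(1)] identities(9)[of "(\<one> \<rightarrow> \<one>) \<rightarrow> x" "(\<one> \<rightarrow> \<one>) \<rightarrow> y" x]
  by (simp add: assms pl_regularize mi_regularize imp_closed unit_closed)

lemma pl_eq: "x \<in> car S \<Longrightarrow> pl S x = (x \<rightarrow> \<one>) \<rightarrow> \<one>"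
  and mi_eq: "x \<in> car S \<Longrightarrow> mi S x = (x \<rightarrow> \<sim>\<one>) \<rightarrow> \<sim>\<one>"
  using identities(6,8)[of x x x] pl_regularize mi_regularize by simp_all

lemma regularize_hom: "is_hom (\<lambda>x. (\<one> \<rightarrow> \<one>) \<rightarrow> x) S (S\<lparr>car := regular\<rparr>)"
  unfolding is_hom_def
  using imp_regular unit_regular regularize_imp regularize_ng pl_regularize mi_regularize
    pl_prefix mi_prefix
  by (simp add: regular_def unit_closed imp_closed)

lemma wajsberg_star_regular: "wajsberg_star (S\<lparr>car := regular\<rparr>)"
proof -
  define M where "M = S\<lparr>car := regular\<rparr>"
  have "closed_alg M"
    using regular_subset unfolding M_def
    by (auto simp: closed_alg_def unit_regular ng_regular_iff intro!: imp_regular pl_regular mi_regular)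
  then have "quasi_wajsberg_star M"
    unfolding M_def using quasi_wajsberg_star_subalgebra quasi_wajsberg_star regular_subset by blast
  moreover have "imp M (imp M y y) x = x" if "x \<in> car M" "y \<in> car M" for x y
    using that regular_absorb regular_subset by (auto simp: M_def)
  moreover have "pl M x = imp M (imp M x (unit M)) (unit M)"
    and "mi M x = imp M (imp M x (ng M (unit M))) (ng M (unit M))" if "x \<in> car M" for x
    using that pl_eq mi_eq regular_subset by (auto simp: M_def)
  ultimately show ?thesis
    unfolding M_def[symmetric] by (rule wajsberg_starI_quasi)
qed

lemma eq_if_regularize_eq_collapse_eq:
  assumes "x \<in> car S" "y \<in> car S"
    and "(\<one> \<rightarrow> \<one>) \<rightarrow> x = (\<one> \<rightarrow> \<one>) \<rightarrow> y" "collapse regular x = collapse regular y"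
  shows "x = y"
  using assms by (auto simp: collapse_eq_iff regular_def)

lemma is_hom_collapse_regular: "is_hom (collapse regular) S (collapse_alg S regular)"
  using unit_regular imp_regular pl_regular mi_regular ng_regular_iff by (rule is_hom_collapse)

lemma strong_qws_collapse_regular: "strong_qws (collapse_alg S regular)"
  using closed_alg unit_regular ng_ng ng_regular_iff by (rule strong_flat_qws_collapse_alg)

lemma flat_qws_collapse_regular: "flat_qws (collapse_alg S regular)"
  using closed_alg unit_regular ng_ng ng_regular_iff by (rule strong_flat_qws_collapse_alg)

end

theorem corollary3p2:
  fixes S :: "'a qalg"
  assumes "strong_qws S"
  shows "\<exists>(M :: 'a set qalg) (F :: 'a set qalg) h.
           wajsberg_star M \<and> strong_qws F \<and> flat_qws F \<and>
           is_embedding h S (prod_alg M F)"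
proof -
  interpret strong_qws_alg S
    using assms by (rule strong_qws_alg.intro)
  define h where "h = (\<lambda>x. ({(\<one> \<rightarrow> \<one>) \<rightarrow> x}, collapse regular x))"
  have "is_hom h S (prod_alg (singleton_alg (S\<lparr>car := regular\<rparr>)) (collapse_alg S regular))"
    unfolding h_def
    using is_hom_comp[OF regularize_hom is_hom_singleton_alg] is_hom_collapse_regular
    by (rule is_hom_pair)
  moreover have "inj_on h (car S)"
  proof (rule inj_onI)
    fix x y
    assume "x \<in> car S" "y \<in> car S" "h x = h y"
    moreover from \<open>h x = h y\<close>
    have "(\<one> \<rightarrow> \<one>) \<rightarrow> x = (\<one> \<rightarrow> \<one>) \<rightarrow> y" "collapse regular x = collapse regular y"
      by (simp_all add: h_def)
    ultimately show "x = y"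
      using eq_if_regularize_eq_collapse_eq by blast
  qed
  ultimately show ?thesis
    using wajsberg_star_singleton_alg[OF wajsberg_star_regular]
      strong_qws_collapse_regular flat_qws_collapse_regular
    unfolding is_embedding_def by blast
qed

end
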